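(* If $n > k \geq s \geq 0$ are integers, then there exists no $(n,k,s,s)$-oriented graph.
   Context: An oriented graph is a digraph with no loops and no pair of symmetric arcs. For vertices $u,v$ write $u(1\text{-}0)v$ if there is an arc from $u$ to $v$, and $u(0\text{-}0)v$ if there is no arc between $u$ and $v$. A vertex $v$ is weakly reachable within two steps from $u$ if $u(1\text{-}0)v$, or $u(0\text{-}0)v$, or for some vertex $w$ one has $u(1\text{-}0)w(1\text{-}0)v$, or $u(1\text{-}0)w(0\text{-}0)v$, or $u(0\text{-}0)w(1\text{-}0)v$. A vertex $u$ is a weak king if every other vertex is weakly reachable within two steps from $u$, and a weak serf if $u$ is weakly reachable within two steps from every other vertex. An $(n,k,s,b)$-oriented graph is an oriented graph on $n$ vertices with exactly $k$ weak kings and exactly $s$ weak serfs, such that exactly $b$ of the weak kings are also weak serfs. *)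

theory Defs
  imports Main
begin

definition oriented_graph :: "'a set \<Rightarrow> ('a \<Rightarrow> 'a \<Rightarrow> bool) \<Rightarrow> bool" where
  "oriented_graph V A \<longleftrightarrow> finite V \<and>
     (\<forall>u v. A u v \<longrightarrow> u \<in> V \<and> v \<in> V) \<and>
     (\<forall>v. \<not> A v v) \<and>
     (\<forall>u v. A u v \<longrightarrow> \<not> A v u)"

definition no_arc :: "('a \<Rightarrow> 'a \<Rightarrow> bool) \<Rightarrow> 'a \<Rightarrow> 'a \<Rightarrow> bool" where
  "no_arc A u v \<longleftrightarrow> \<not> A u v \<and> \<not> A v u"

definition weakly_reach2 :: "'a set \<Rightarrow> ('a \<Rightarrow> 'a \<Rightarrow> bool) \<Rightarrow> 'a \<Rightarrow> 'a \<Rightarrow> bool" where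
  "weakly_reach2 V A u v \<longleftrightarrow>
     A u v \<or> no_arc A u v \<or>
     (\<exists>w\<in>V. (A u w \<and> A w v) \<or> (A u w \<and> no_arc A w v) \<or> (no_arc A u w \<and> A w v))"

definition weak_king :: "'a set \<Rightarrow> ('a \<Rightarrow> 'a \<Rightarrow> bool) \<Rightarrow> 'a \<Rightarrow> bool" where
  "weak_king V A u \<longleftrightarrow> u \<in> V \<and> (\<forall>v\<in>V. v \<noteq> u \<longrightarrow> weakly_reach2 V A u v)"

definition weak_serf :: "'a set \<Rightarrow> ('a \<Rightarrow> 'a \<Rightarrow> bool) \<Rightarrow> 'a \<Rightarrow> bool" where
  "weak_serf V A u \<longleftrightarrow> u \<in> V \<and> (\<forall>v\<in>V. v \<noteq> u \<longrightarrow> weakly_reach2 V A v u)"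

definition nksb_oriented_graph ::
  "'a set \<Rightarrow> ('a \<Rightarrow> 'a \<Rightarrow> bool) \<Rightarrow> nat \<Rightarrow> nat \<Rightarrow> nat \<Rightarrow> nat \<Rightarrow> bool" where
  "nksb_oriented_graph V A n k s b \<longleftrightarrow>
     oriented_graph V A \<and> card V = n \<and>
     card {u\<in>V. weak_king V A u} = k \<and>
     card {u\<in>V. weak_serf V A u} = s \<and>
     card {u\<in>V. weak_king V A u \<and> weak_serf V A u} = b"

end

theory Submission
  imports Defs
begin

text \<open>A vertex x fails to weakly reach y within two steps exactly when y dominates x: y beats x,
  y beats everything x beats, and everything beating y beats x. So weak kings are the undominated
  vertices and weak serfs the vertices dominating nobody. A dominator has strictly larger
  out-neighbourhood than the vertex it dominates; hence a non-king of least out-degree among the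
  non-kings dominates nobody (anything it dominated would be a non-king of smaller out-degree), so it
  is a weak serf that is not a weak king. Thus b = s forces every vertex to be a weak king, i.e. k = n.\<close>

definition dominates :: "('a \<Rightarrow> 'a \<Rightarrow> bool) \<Rightarrow> 'a \<Rightarrow> 'a \<Rightarrow> bool" where
  "dominates A y x \<longleftrightarrow> A y x \<and> (\<forall>w. A x w \<longrightarrow> A y w) \<and> (\<forall>w. A w y \<longrightarrow> A w x)"

lemma not_weakly_reach2_iff_dominates:
  assumes og: "oriented_graph V A" and "x \<in> V" "y \<in> V" "x \<noteq> y"
  shows "\<not> weakly_reach2 V A x y \<longleftrightarrow> dominates A y x"
proof
  assume nr: "\<not> weakly_reach2 V A x y"
  have in_V: "A u v \<Longrightarrow> u \<in> V \<and> v \<in> V" for u v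
    using og unfolding oriented_graph_def by blast
  have yx: "A y x"
    using nr unfolding weakly_reach2_def no_arc_def by auto
  have out: "A y w" if "A x w" for w
    using nr that in_V[OF that] unfolding weakly_reach2_def no_arc_def by auto
  have "A w x" if "A w y" for w
    using nr that in_V[OF that] out og
    unfolding weakly_reach2_def no_arc_def oriented_graph_def by metis
  with yx out show "dominates A y x"
    unfolding dominates_def by blast
next
  assume "dominates A y x"
  then show "\<not> weakly_reach2 V A x y"
    using og unfolding dominates_def weakly_reach2_def no_arc_def oriented_graph_def by metis
qed

lemma not_dominates_self:
  assumes "oriented_graph V A"
  shows "\<not> dominates A u u"
  using assms unfolding dominates_def oriented_graph_def by blast

lemma weak_king_iff_undominated:
  assumes "oriented_graph V A" and "u \<in> V"
  shows "weak_king V A u \<longleftrightarrow> (\<forall>v\<in>V. \<not> dominates A v u)"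
  using not_weakly_reach2_iff_dominates[OF assms] not_dominates_self[OF assms(1)] assms(2)
  unfolding weak_king_def by metis

lemma weak_serf_iff_dominates_none:
  assumes "oriented_graph V A" and "u \<in> V"
  shows "weak_serf V A u \<longleftrightarrow> (\<forall>v\<in>V. \<not> dominates A u v)"
  using not_weakly_reach2_iff_dominates[OF assms(1) _ assms(2)] not_dominates_self[OF assms(1)]
    assms(2)
  unfolding weak_serf_def by metis

lemma dominates_out_degree_less:
  assumes og: "oriented_graph V A" and "dominates A y x"
  shows "card {w\<in>V. A x w} < card {w\<in>V. A y w}"
proof (rule psubset_card_mono)
  show "finite {w\<in>V. A y w}"
    using og unfolding oriented_graph_def by simp
  have "x \<in> {w\<in>V. A y w}" "x \<notin> {w\<in>V. A x w}"
    using assms unfolding dominates_def oriented_graph_def by blast+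
  then show "{w\<in>V. A x w} \<subset> {w\<in>V. A y w}"
    using assms(2) unfolding dominates_def by blast
qed

lemma exists_weak_serf_not_weak_king:
  assumes og: "oriented_graph V A" and "x \<in> V" "\<not> weak_king V A x"
  shows "\<exists>m\<in>V. weak_serf V A m \<and> \<not> weak_king V A m"
proof -
  obtain m where m: "m \<in> V" "\<not> weak_king V A m"
    and least: "\<And>z. z \<in> V \<Longrightarrow> \<not> weak_king V A z \<Longrightarrow> card {w\<in>V. A m w} \<le> card {w\<in>V. A z w}"
    using ex_has_least_nat[of "\<lambda>z. z \<in> V \<and> \<not> weak_king V A z" x "\<lambda>z. card {w\<in>V. A z w}"]
      assms(2,3) by blast
  have "\<not> dominates A m z" if "z \<in> V" for z
  proof
    assume dom: "dominates A m z"
    then have "\<not> weak_king V A z"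
      using weak_king_iff_undominated[OF og that] m(1) by blast
    then show False
      using least[OF that] dominates_out_degree_less[OF og dom] by simp
  qed
  then show ?thesis
    using weak_serf_iff_dominates_none[OF og m(1)] m by blast
qed

theorem theorem8:
  fixes n k s :: nat and V :: "'a set" and A :: "'a \<Rightarrow> 'a \<Rightarrow> bool"
  assumes "n > k" and "k \<ge> s"
  shows "\<not> nksb_oriented_graph V A n k s s"
proof
  assume G: "nksb_oriented_graph V A n k s s"
  then have og: "oriented_graph V A" and fin: "finite V"
    unfolding nksb_oriented_graph_def oriented_graph_def by auto
  have "{u\<in>V. weak_king V A u} \<noteq> V"
    using G assms(1) unfolding nksb_oriented_graph_def by auto
  then obtain x where "x \<in> V" "\<not> weak_king V A x"
    by blast
  then obtain m where "m \<in> V" "weak_serf V A m" "\<not> weak_king V A m"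
    using exists_weak_serf_not_weak_king[OF og] by blast
  then have "{u\<in>V. weak_king V A u \<and> weak_serf V A u} \<subset> {u\<in>V. weak_serf V A u}"
    by blast
  then have "card {u\<in>V. weak_king V A u \<and> weak_serf V A u} < card {u\<in>V. weak_serf V A u}"
    by (rule psubset_card_mono[rotated]) (use fin in simp)
  with G show False
    unfolding nksb_oriented_graph_def by simp
qed

end
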